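(* Consider the Decaying-$\epsilon$-FOCuS procedure (described in the context) on $M>1$ streams, where stream 1 has a change-point at $\nu=0$ (every observation of stream 1 is $\mathcal{N}(\mu_1,1)$ with $\mu_1\ne0$, all other observations $\mathcal{N}(0,1)$). Then for every $t\ge M^3+1$, $$\mathbb{P}_{M,0}\left(T_t^{(1)}<\frac{\mu_1^2t^{2/3}}{8},\ N_t^{(1)}\le\frac{t^{2/3}}{2}\right)\le\exp\left(-2\left(t^{1/6}-\frac{1}{\sqrt t}\left(\frac{3(M^3+1)^{2/3}}{2}-M^2\right)\right)^2\right),$$ and for $t=0$ this probability is $0$.
   Context: Setting: there are $M$ independent data streams. At each time $t=1,2,\dots$ an agent selects one stream $A_t\in\{1,\dots,M\}$ and observes one value $X_t\in\mathbb{R}$ from it. The $i$-th observation taken from stream $m$ is denoted $X_i^{(m)}$. Pre-change observations are $\mathcal{N}(0,1)$. Stream 1 has a change-point $\nu$: if $A_t=1$ and $t>\nu$ then $X_t\sim\mathcal{N}(\mu_1,1)$ with $\mu_1\neq0$; otherwise $X_t\sim\mathcal{N}(0,1)$; observations are conditionally independent given the selections. $\mathbb{P}_{M,\nu}$ denotes probability for $M$ streams with change at $\nu$ in stream 1. $\mathcal{F}_t=\sigma(A_1,X_1,\dots,A_t,X_t)$. The sampling process and statistics are defined for all $t\ge 0$. Decaying-$\epsilon$-FOCuS: let $N_t^{(m)}$ be the number of times stream $m$ was selected up to and including time $t$. The local GLR statistic is $T_t^{(m)}=\max_{0\le k<N_t^{(m)}}\frac{(\sum_{i=k+1}^{N_t^{(m)}}X_i^{(m)})^2}{2(N_t^{(m)}-k)}$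 (and $T_t^{(m)}=0$ if $N_t^{(m)}=0$); $M_t=\arg\max_m T_t^{(m)}$. The local change-point estimate $\hat\nu_t^{(m)}$ is the time at which stream $m$'s $\hat k$-th observation was taken, where $\hat k$ is the maximizing index $k$ in $T_t^{(m)}$ (time $0$ if $\hat k=0$ or $N_t^{(m)}=0$); the global estimate is $\hat\nu_t=\hat\nu_t^{(M_t)}$; ties are broken uniformly at random. Initially $\hat\nu_0=0$, $M_0$ uniform on $[M]$. At time $t$, set $\epsilon_t=\min\{1, M/\max(1,t-\hat\nu_{t-1})^{1/3}\}$, draw $G_t\sim\mathrm{Bernoulli}(\epsilon_t)$ (conditionally on $\mathcal{F}_{t-1}$); if $G_t=1$ choose $A_t$ uniformly from $[M]$, otherwise $A_t=M_{t-1}$; then observe $X_t$ and update the statistics. *)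

theory Defs
  imports "HOL-Probability.Probability"
begin

text \<open>Decaying-epsilon-FOCuS with M streams (indexed 1..M), change at nu = 0 in stream 1.
  Sample point: (X, U, R, VM, VK) where
  X (m,i)  = i-th observation taken from stream m (i >= 1),
  U t      = uniform [0,1) variable used to draw G_t = [U t < eps_t] (Bernoulli(eps_t)),
  R t      = uniform choice in {1..M} used when exploring at time t,
  VM t     = uniform [0,1) tie-break variable for M_t (argmax over streams),
  VK (t,m) = uniform [0,1) tie-break variable for the argmax index k of stream m at time t.\<close>

type_synonym sample = "(nat \<times> nat \<Rightarrow> real) \<times> (nat \<Rightarrow> real) \<times> (nat \<Rightarrow> nat)
                        \<times> (nat \<Rightarrow> real) \<times> (nat \<times> nat \<Rightarrow> real)"

definition gauss :: "real \<Rightarrow> real measure" where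
  "gauss mu = density lborel (normal_density mu 1)"

definition unif01 :: "real measure" where
  "unif01 = uniform_measure lborel {0..<1}"

definition focus_space :: "nat \<Rightarrow> real \<Rightarrow> sample measure" where
  "focus_space M mu =
     (PiM UNIV (\<lambda>(m, i). if m = 1 then gauss mu else gauss 0))
     \<Otimes>\<^sub>M ((PiM UNIV (\<lambda>_. unif01))
     \<Otimes>\<^sub>M ((PiM UNIV (\<lambda>_. measure_pmf (pmf_of_set {1..M})))
     \<Otimes>\<^sub>M ((PiM UNIV (\<lambda>_. unif01))
     \<Otimes>\<^sub>M (PiM UNIV (\<lambda>_. unif01)))))"

text \<open>Uniform choice from a finite nonempty set S driven by v uniform in [0,1).\<close>
definition pick :: "real \<Rightarrow> 'a::linorder set \<Rightarrow> 'a" where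
  "pick v S = sorted_list_of_set S ! nat \<lfloor>v * real (card S)\<rfloor>"

text \<open>h = list of selections A_1..A_t (so t = length h).\<close>
definition Ncount :: "nat list \<Rightarrow> nat \<Rightarrow> nat" where
  "Ncount h m = length (filter (\<lambda>a. a = m) h)"

definition seg :: "(nat \<times> nat \<Rightarrow> real) \<Rightarrow> nat \<Rightarrow> nat \<Rightarrow> nat \<Rightarrow> real" where
  "seg X m n k = (\<Sum>i\<in>{k+1..n}. X (m, i))^2 / (2 * real (n - k))"

definition Tstat :: "(nat \<times> nat \<Rightarrow> real) \<Rightarrow> nat list \<Rightarrow> nat \<Rightarrow> real" where
  "Tstat X h m = (let n = Ncount h m in
      if n = 0 then 0 else Max ((\<lambda>k. seg X m n k) ` {..<n}))"

definition khat :: "(nat \<times> nat \<Rightarrow> real) \<Rightarrow> (nat \<times> nat \<Rightarrow> real) \<Rightarrow> nat list \<Rightarrow> nat \<Rightarrow> nat" where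
  "khat X VK h m = (let n = Ncount h m in
      if n = 0 then 0
      else pick (VK (length h, m)) {k. k < n \<and> seg X m n k = Tstat X h m})"

text \<open>Time (1-based position in h) of the k-th selection of stream m; 0 if k = 0.\<close>
definition occ_time :: "nat list \<Rightarrow> nat \<Rightarrow> nat \<Rightarrow> nat" where
  "occ_time h m k = (if k = 0 then 0 else (LEAST j. Ncount (take j h) m = k))"

definition nuhat_loc :: "(nat \<times> nat \<Rightarrow> real) \<Rightarrow> (nat \<times> nat \<Rightarrow> real) \<Rightarrow> nat list \<Rightarrow> nat \<Rightarrow> nat" where
  "nuhat_loc X VK h m = occ_time h m (khat X VK h m)"

definition Mhat :: "nat \<Rightarrow> (nat \<times> nat \<Rightarrow> real) \<Rightarrow> (nat \<Rightarrow> real) \<Rightarrow> nat list \<Rightarrow> nat" where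
  "Mhat M X VM h = pick (VM (length h))
      {m \<in> {1..M}. Tstat X h m = Max (Tstat X h ` {1..M})}"

definition nuhat :: "nat \<Rightarrow> (nat \<times> nat \<Rightarrow> real) \<Rightarrow> (nat \<Rightarrow> real) \<Rightarrow> (nat \<times> nat \<Rightarrow> real)
    \<Rightarrow> nat list \<Rightarrow> nat" where
  "nuhat M X VM VK h = nuhat_loc X VK h (Mhat M X VM h)"

definition eps :: "nat \<Rightarrow> nat \<Rightarrow> nat \<Rightarrow> real" where
  "eps M t nu = min 1 (real M / (max 1 (real t - real nu)) powr (1/3))"

primrec hist :: "nat \<Rightarrow> sample \<Rightarrow> nat \<Rightarrow> nat list" where
  "hist M \<omega> 0 = []"
| "hist M \<omega> (Suc t) =
     (case \<omega> of (X, U, R, VM, VK) \<Rightarrow>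
        (let h = hist M \<omega> t;
             e = eps M (Suc t) (nuhat M X VM VK h);
             a = (if U (Suc t) < e then R (Suc t) else Mhat M X VM h)
         in h @ [a]))"

definition bad_event :: "nat \<Rightarrow> real \<Rightarrow> nat \<Rightarrow> sample set" where
  "bad_event M mu t = {\<omega> \<in> space (focus_space M mu).
      Tstat (fst \<omega>) (hist M \<omega> t) 1 < mu^2 * real t powr (2/3) / 8
    \<and> real (Ncount (hist M \<omega> t) 1) \<le> real t powr (2/3) / 2}"

end

theory Submission
  imports Defs
begin

text \<open>Whatever the change-point estimate, at time s the procedure explores with probability
  eps_s >= q_s = min 1 (M / s^(1/3)), and an exploring step selects stream 1 with probability 1/M.
  Hence the event E_s = {U_s < q_s, R_s = 1} (explores_one M s below) forces A_s = 1, and since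
  these events involve only the exogenous randomness they are independent, with probability q_s / M.
  So N_t^(1) dominates a sum of independent indicators whose mean is at least
  3/2 t^(2/3) + M^2 - 3/2 (M^3 + 1)^(2/3) (compare the sum of s^(-1/3) with an integral), and
  Hoeffding's inequality bounds the probability that it stays below t^(2/3) / 2.\<close>

lemma sets_gauss [measurable_cong]: "sets (gauss mu) = sets borel"
  by (simp add: gauss_def)

lemma sets_unif01 [measurable_cong]: "sets unif01 = sets borel"
  by (simp add: unif01_def)

lemma space_focus_space: "space (focus_space M mu) = UNIV"
  unfolding focus_space_def
  by (auto simp: space_pair_measure space_PiM gauss_def unif01_def PiE_def extensional_def)

abbreviation obs_of :: "sample \<Rightarrow> nat \<times> nat \<Rightarrow> real" where
  "obs_of \<omega> \<equiv> fst \<omega>"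

abbreviation coin_of :: "sample \<Rightarrow> nat \<Rightarrow> real" where
  "coin_of \<omega> \<equiv> fst (snd \<omega>)"

abbreviation arm_of :: "sample \<Rightarrow> nat \<Rightarrow> nat" where
  "arm_of \<omega> \<equiv> fst (snd (snd \<omega>))"

abbreviation tie_stream_of :: "sample \<Rightarrow> nat \<Rightarrow> real" where
  "tie_stream_of \<omega> \<equiv> fst (snd (snd (snd \<omega>)))"

abbreviation tie_index_of :: "sample \<Rightarrow> nat \<times> nat \<Rightarrow> real" where
  "tie_index_of \<omega> \<equiv> snd (snd (snd (snd \<omega>)))"

lemma measurable_obs [measurable]:
  "(\<lambda>\<omega>. obs_of \<omega> (m, i)) \<in> borel_measurable (focus_space M mu)"
proof -
  have "(\<lambda>\<omega>. obs_of \<omega> (m, i))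
      \<in> measurable (focus_space M mu) ((\<lambda>(m, i). if m = 1 then gauss mu else gauss 0) (m, i))"
    unfolding focus_space_def
    by (rule measurable_compose[OF measurable_fst measurable_component_singleton]) simp
  then show ?thesis
    by (cases "m = 1") (simp_all add: measurable_cong_sets[OF refl sets_gauss])
qed

lemma measurable_coin [measurable]:
  "(\<lambda>\<omega>. coin_of \<omega> s) \<in> borel_measurable (focus_space M mu)"
  unfolding focus_space_def by measurable

lemma measurable_arm [measurable]:
  "(\<lambda>\<omega>. arm_of \<omega> s) \<in> measurable (focus_space M mu) (count_space UNIV)"
  unfolding focus_space_def by measurable

lemma measurable_tie_stream [measurable]:
  "(\<lambda>\<omega>. tie_stream_of \<omega> s) \<in> borel_measurable (focus_space M mu)"
  unfolding focus_space_def by measurable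

lemma measurable_tie_index [measurable]:
  "(\<lambda>\<omega>. tie_index_of \<omega> (s, m)) \<in> borel_measurable (focus_space M mu)"
  unfolding focus_space_def by measurable

lemma measurable_pick:
  fixes S :: "'b \<Rightarrow> 'a::linorder set"
  assumes A: "finite A" and S_sub: "\<And>x. S x \<subseteq> A"
    and S_mem: "\<And>a. a \<in> A \<Longrightarrow> Measurable.pred F (\<lambda>x. a \<in> S x)"
    and [measurable]: "v \<in> borel_measurable F"
  shows "(\<lambda>x. pick (v x) (S x)) \<in> measurable F (count_space UNIV)"
proof (rule measurable_compose_countable'[where I = "Pow A"])
  fix T :: "'a set"
  have "(\<lambda>x. \<lfloor>v x * real (card T)\<rfloor>) \<in> measurable F (count_space UNIV)"
    by measurable
  then show "(\<lambda>x. pick (v x) T) \<in> measurable F (count_space UNIV)"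
    unfolding pick_def by (rule measurable_compose) simp
next
  show "countable (Pow A)"
    using A by (simp add: countable_finite)
next
  have "Measurable.pred F (\<lambda>x. S x = T)" if "T \<in> Pow A" for T
  proof -
    have "S x = T \<longleftrightarrow> (\<forall>a\<in>A. a \<in> S x \<longleftrightarrow> a \<in> T)" for x
      using S_sub[of x] that by blast
    moreover have "Measurable.pred F (\<lambda>x. \<forall>a\<in>A. a \<in> S x \<longleftrightarrow> a \<in> T)"
      using A S_mem by measurable
    ultimately show ?thesis by simp
  qed
  then show "S \<in> measurable F (count_space (Pow A))"
    using A S_sub by (auto simp: measurable_count_space_eq2 pred_def vimage_def Int_def conj_commute)
qed

lemma measurable_Tstat [measurable]:
  "(\<lambda>\<omega>. Tstat (obs_of \<omega>) h m) \<in> borel_measurable (focus_space M mu)"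
  unfolding Tstat_def Let_def seg_def by measurable

lemma measurable_Mhat [measurable]:
  "(\<lambda>\<omega>. Mhat M (obs_of \<omega>) (tie_stream_of \<omega>) h)
     \<in> measurable (focus_space M mu) (count_space UNIV)"
  unfolding Mhat_def by (rule measurable_pick[where A = "{1..M}"]) auto

lemma measurable_khat [measurable]:
  "(\<lambda>\<omega>. khat (obs_of \<omega>) (tie_index_of \<omega>) h m)
     \<in> measurable (focus_space M mu) (count_space UNIV)"
  unfolding khat_def Let_def seg_def
  by (cases "Ncount h m = 0") (auto intro!: measurable_pick[where A = "{..<Ncount h m}"])

lemma measurable_nuhat [measurable]:
  "(\<lambda>\<omega>. nuhat M (obs_of \<omega>) (tie_stream_of \<omega>) (tie_index_of \<omega>) h)
     \<in> measurable (focus_space M mu) (count_space UNIV)"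
  unfolding nuhat_def nuhat_loc_def
  by (rule measurable_compose_countable[OF _ measurable_Mhat]) simp

lemma hist_Suc_eq:
  "hist M \<omega> (Suc t) = hist M \<omega> t @
     [if coin_of \<omega> (Suc t)
           < eps M (Suc t) (nuhat M (obs_of \<omega>) (tie_stream_of \<omega>) (tie_index_of \<omega>) (hist M \<omega> t))
      then arm_of \<omega> (Suc t) else Mhat M (obs_of \<omega>) (tie_stream_of \<omega>) (hist M \<omega> t)]"
  by (cases \<omega>) (simp add: Let_def)

lemma measurable_hist [measurable]:
  "(\<lambda>\<omega>. hist M \<omega> t) \<in> measurable (focus_space M mu) (count_space UNIV)"
proof (induction t)
  case (Suc t)
  have "(\<lambda>\<omega>. h @ [if coin_of \<omega> (Suc t)
          < eps M (Suc t) (nuhat M (obs_of \<omega>) (tie_stream_of \<omega>) (tie_index_of \<omega>) h)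
      then arm_of \<omega> (Suc t) else Mhat M (obs_of \<omega>) (tie_stream_of \<omega>) h])
    \<in> measurable (focus_space M mu) (count_space UNIV)" for h
    by measurable
  then show ?case
    unfolding hist_Suc_eq by (rule measurable_compose_countable[OF _ Suc.IH])
qed simp

lemma sets_bad_event [measurable]: "bad_event M mu t \<in> sets (focus_space M mu)"
  unfolding bad_event_def by measurable

lemma prob_space_gauss: "prob_space (gauss mu)"
  unfolding gauss_def by (rule prob_space_normal_density) simp

lemma prob_space_unif01: "prob_space unif01"
  unfolding unif01_def by (rule prob_space_uniform_measure) auto

lemma emeasure_unif01_lessThan:
  assumes "0 \<le> q" "q \<le> 1"
  shows "emeasure unif01 {..<q} = ennreal q"
proof -
  have "{0..<1} \<inter> {..<q} = {0..<q}"
    using assms by auto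
  then show ?thesis
    unfolding unif01_def using assms by (simp add: divide_ennreal_def)
qed

lemma prob_space_focus_space: "prob_space (focus_space M mu)"
  unfolding focus_space_def
  by (intro prob_space_pair prob_space_PiM prob_space_unif01 prob_space_measure_pmf)
     (simp add: prob_space_gauss split: prod.split)

lemma emeasure_pair_measure_space_Times:
  assumes "prob_space M" "sigma_finite_measure N" "B \<in> sets N"
  shows "emeasure (M \<Otimes>\<^sub>M N) (space M \<times> B) = emeasure N B"
  using sigma_finite_measure.emeasure_pair_measure_Times[OF assms(2) sets.top[of M] assms(3)]
    prob_space.emeasure_space_1[OF assms(1)] by simp

lemma emeasure_pair_measure_Times_space:
  assumes "prob_space N" "A \<in> sets M"
  shows "emeasure (M \<Otimes>\<^sub>M N) (A \<times> space N) = emeasure M A"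
  using sigma_finite_measure.emeasure_pair_measure_Times[OF prob_space_imp_sigma_finite[OF assms(1)]
      assms(2) sets.top[of N]]
    prob_space.emeasure_space_1[OF assms(1)] by simp

lemma emeasure_coins_below_arms_one:
  assumes J: "finite J" and q: "\<And>j. j \<in> J \<Longrightarrow> 0 \<le> q j \<and> q j \<le> 1" and M: "M > 0"
  shows "emeasure (focus_space M mu) {\<omega>. \<forall>j\<in>J. coin_of \<omega> j < q j \<and> arm_of \<omega> j = 1}
    = (\<Prod>j\<in>J. ennreal (q j / real M))"
proof -
  let ?PX = "PiM UNIV (\<lambda>(m, i). if m = 1 then gauss mu else gauss 0) :: (nat \<times> nat \<Rightarrow> real) measure"
  let ?PU = "PiM UNIV (\<lambda>_::nat. unif01)"
  let ?PR = "PiM UNIV (\<lambda>_::nat. measure_pmf (pmf_of_set {1..M}))"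
  let ?PT = "PiM UNIV (\<lambda>_::nat. unif01) \<Otimes>\<^sub>M PiM UNIV (\<lambda>_::nat \<times> nat. unif01)"
  interpret PU: product_prob_space "\<lambda>_::nat. unif01" UNIV
    by (intro product_prob_spaceI prob_space_unif01)
  interpret PR: product_prob_space "\<lambda>_::nat. measure_pmf (pmf_of_set {1..M})" UNIV
    by (intro product_prob_spaceI prob_space_measure_pmf)
  define SU where "SU = {u \<in> space ?PU. \<forall>j\<in>J. u j \<in> {..<q j}}"
  define SR where "SR = {r \<in> space ?PR. \<forall>j\<in>J. r j = 1}"
  have event: "{\<omega>. \<forall>j\<in>J. coin_of \<omega> j < q j \<and> arm_of \<omega> j = 1}
      = space ?PX \<times> (SU \<times> (SR \<times> space ?PT))"
    by (auto simp: SU_def SR_def space_PiM space_pair_measure unif01_def gauss_def)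
  have SU: "SU \<in> sets ?PU"
    unfolding SU_def using J by measurable
  have SR: "SR \<in> sets ?PR"
    unfolding SR_def using J by measurable
  have "emeasure (focus_space M mu) {\<omega>. \<forall>j\<in>J. coin_of \<omega> j < q j \<and> arm_of \<omega> j = 1}
      = emeasure (?PU \<Otimes>\<^sub>M (?PR \<Otimes>\<^sub>M ?PT)) (SU \<times> (SR \<times> space ?PT))"
    unfolding event focus_space_def
    by (intro emeasure_pair_measure_space_Times prob_space_PiM prob_space_imp_sigma_finite
        prob_space_pair prob_space_unif01 prob_space_measure_pmf pair_measureI SU SR sets.top)
       (simp add: prob_space_gauss split: prod.split)
  also have "\<dots> = emeasure ?PU SU * emeasure (?PR \<Otimes>\<^sub>M ?PT) (SR \<times> space ?PT)"
    by (intro sigma_finite_measure.emeasure_pair_measure_Times prob_space_imp_sigma_finite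
        prob_space_pair prob_space_PiM prob_space_unif01 prob_space_measure_pmf pair_measureI SU SR sets.top)
  also have "\<dots> = emeasure ?PU SU * emeasure ?PR SR"
    using SR by (subst emeasure_pair_measure_Times_space)
       (auto intro!: prob_space_pair prob_space_PiM prob_space_unif01)
  also have "emeasure ?PU SU = (\<Prod>j\<in>J. ennreal (q j))"
    unfolding SU_def using J q
    by (subst PU.emeasure_PiM_Collect) (auto simp: emeasure_unif01_lessThan intro!: prod.cong)
  also have "emeasure ?PR SR = (\<Prod>j\<in>J. ennreal (1 / real M))"
    unfolding SR_def using J M PR.emeasure_PiM_Collect[of J "\<lambda>_. {1}"]
    by (auto simp: emeasure_pmf_single intro!: prod.cong)
  also have "(\<Prod>j\<in>J. ennreal (q j)) * (\<Prod>j\<in>J. ennreal (1 / real M))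
      = (\<Prod>j\<in>J. ennreal (q j / real M))"
    unfolding prod.distrib[symmetric] using q by (intro prod.cong refl) (simp add: ennreal_mult[symmetric])
  finally show ?thesis .
qed

definition explore_prob :: "nat \<Rightarrow> nat \<Rightarrow> real" where
  "explore_prob M s = min 1 (real M / real s powr (1/3))"

definition explores_one :: "nat \<Rightarrow> nat \<Rightarrow> sample set" where
  "explores_one M s = {\<omega>. coin_of \<omega> s < explore_prob M s \<and> arm_of \<omega> s = 1}"

lemma explore_prob_nonneg: "0 \<le> explore_prob M s"
  by (simp add: explore_prob_def)

lemma explore_prob_le_1: "explore_prob M s \<le> 1"
  by (simp add: explore_prob_def)

lemma sets_explores_one [measurable]: "explores_one M s \<in> sets (focus_space M mu)"
proof -
  have "{\<omega> \<in> space (focus_space M mu). coin_of \<omega> s < explore_prob M s \<and> arm_of \<omega> s = 1}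
      \<in> sets (focus_space M mu)"
    by measurable
  then show ?thesis
    by (simp add: explores_one_def space_focus_space)
qed

lemma measure_Inter_explores_one:
  assumes "finite J" "M > 0"
  shows "measure (focus_space M mu) (\<Inter>s\<in>J. explores_one M s)
    = (\<Prod>s\<in>J. explore_prob M s / real M)"
proof -
  have "(\<Inter>s\<in>J. explores_one M s)
      = {\<omega>. \<forall>s\<in>J. coin_of \<omega> s < explore_prob M s \<and> arm_of \<omega> s = 1}"
    by (auto simp: explores_one_def)
  then have "emeasure (focus_space M mu) (\<Inter>s\<in>J. explores_one M s)
      = ennreal (\<Prod>s\<in>J. explore_prob M s / real M)"
    using emeasure_coins_below_arms_one[OF assms(1) _ assms(2)] explore_prob_nonneg explore_prob_le_1
    by (simp add: prod_ennreal)
  then show ?thesis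
    by (simp add: measure_def prod_nonneg explore_prob_nonneg)
qed

lemma measure_explores_one:
  "M > 0 \<Longrightarrow> measure (focus_space M mu) (explores_one M s) = explore_prob M s / real M"
  using measure_Inter_explores_one[of "{s}" M mu] by simp

lemma indep_explores_one:
  "M > 0 \<Longrightarrow> prob_space.indep_events (focus_space M mu) (explores_one M) I"
  by (intro prob_space.indep_eventsI prob_space_focus_space sets_explores_one)
     (simp add: measure_Inter_explores_one measure_explores_one)

lemma (in prob_space) indep_vars_indicator:
  assumes "indep_events A I"
  shows "indep_vars (\<lambda>_. borel) (\<lambda>i. indicator (A i) :: 'a \<Rightarrow> real) I"
proof -
  have A: "A i \<in> events" if "i \<in> I" for i
    using assms that unfolding indep_events_def by auto
  have "indep_sets (\<lambda>i. sigma_sets (space M) {A i}) I"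
    using assms unfolding indep_events_def_alt by (rule indep_sets_sigma) (auto simp: Int_stable_def)
  moreover have "{(indicator (A i) :: 'a \<Rightarrow> real) -` B \<inter> space M |B. B \<in> sets borel}
      \<subseteq> sigma_sets (space M) {A i}"
    if "i \<in> I" for i
  proof safe
    fix B :: "real set"
    have "indicator (A i) -` B \<inter> space M =
      (if 1 \<in> B then if 0 \<in> B then space M else A i else if 0 \<in> B then space M - A i else {})"
      using sets.sets_into_space[OF A[OF that]] by (auto simp: indicator_def of_bool_def split: if_splits)
    then show "indicator (A i) -` B \<inter> space M \<in> sigma_sets (space M) {A i}"
      by (auto intro: sigma_sets.Basic sigma_sets.Compl sigma_sets.Empty sigma_sets_top)
  qed
  ultimately show ?thesis
    unfolding indep_vars_def2 using A by (auto intro: indep_sets_mono_sets)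
qed

lemma prob_few_explorations_le:
  assumes "M > 0" "0 \<le> e" "t > 0"
  shows "measure (focus_space M mu) {\<omega> \<in> space (focus_space M mu).
      (\<Sum>s=1..t. indicator (explores_one M s) \<omega>) \<le> (\<Sum>s=1..t. explore_prob M s / real M) - e}
    \<le> exp (-2 * e^2 / real t)"
proof -
  interpret P: prob_space "focus_space M mu"
    by (rule prob_space_focus_space)
  interpret Hoeffding_ineq "focus_space M mu" "{1..t}" "\<lambda>s. indicator (explores_one M s)"
      "\<lambda>_. 0" "\<lambda>_. 1"
      "\<Sum>s=1..t. explore_prob M s / real M"
  proof unfold_locales
    show "P.indep_vars (\<lambda>_. borel) (\<lambda>s. indicator (explores_one M s) :: sample \<Rightarrow> real) {1..t}"
      by (rule P.indep_vars_indicator[OF indep_explores_one[OF assms(1)]])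
  qed (simp_all add: indicator_def measure_explores_one[OF assms(1)])
  show ?thesis
    using Hoeffding_ineq_le[OF assms(2)] assms(3) by simp
qed

lemma explore_prob_le_eps:
  assumes "1 \<le> s"
  shows "explore_prob M s \<le> eps M s nu"
proof -
  define d where "d = max 1 (real s - real nu)"
  have "1 \<le> d" "d \<le> real s"
    using assms by (auto simp: d_def)
  then have "real M / real s powr (1/3) \<le> real M / d powr (1/3)"
    by (intro divide_left_mono powr_mono2 mult_pos_pos) auto
  then show ?thesis
    unfolding explore_prob_def eps_def d_def[symmetric] by linarith
qed

lemma hist_Suc_if_explores_one:
  assumes "\<omega> \<in> explores_one M (Suc t)"
  shows "hist M \<omega> (Suc t) = hist M \<omega> t @ [1]"
  using assms explore_prob_le_eps[of "Suc t" M] unfolding explores_one_def hist_Suc_eq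
  by (auto intro: less_le_trans)

lemma Ncount_snoc: "Ncount (h @ [a]) m = Ncount h m + (if a = m then 1 else 0)"
  by (simp add: Ncount_def)

lemma sum_indicator_explores_one_le_Ncount:
  "(\<Sum>s=1..t. indicator (explores_one M s) \<omega>) \<le> real (Ncount (hist M \<omega> t) 1)"
proof (induction t)
  case (Suc t)
  have "indicator (explores_one M (Suc t)) \<omega>
      \<le> real (Ncount (hist M \<omega> (Suc t)) 1) - Ncount (hist M \<omega> t) 1"
  proof (cases "\<omega> \<in> explores_one M (Suc t)")
    case True
    then show ?thesis
      by (simp del: hist.simps add: hist_Suc_if_explores_one Ncount_snoc)
  next
    case False
    then show ?thesis
      by (simp del: hist.simps add: hist_Suc_eq Ncount_snoc)
  qed
  with Suc.IH show ?case
    by simp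
qed simp

lemma prob_Ncount_one_le:
  assumes "M > 0" "0 \<le> e" "t > 0"
  shows "measure (focus_space M mu) {\<omega> \<in> space (focus_space M mu).
      real (Ncount (hist M \<omega> t) 1) \<le> (\<Sum>s=1..t. explore_prob M s / real M) - e}
    \<le> exp (-2 * e^2 / real t)"
proof -
  interpret P: prob_space "focus_space M mu"
    by (rule prob_space_focus_space)
  let ?m = "\<Sum>s=1..t. explore_prob M s / real M"
  have "{\<omega> \<in> space (focus_space M mu). real (Ncount (hist M \<omega> t) 1) \<le> ?m - e}
    \<subseteq> {\<omega> \<in> space (focus_space M mu). (\<Sum>s=1..t. indicator (explores_one M s) \<omega>) \<le> ?m - e}"
    (is "?A \<subseteq> ?B")
    using order_trans[OF sum_indicator_explores_one_le_Ncount] by blast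
  then have "measure (focus_space M mu) ?A \<le> measure (focus_space M mu) ?B"
    by (rule P.finite_measure_mono) measurable
  also have "\<dots> \<le> exp (-2 * e^2 / real t)"
    by (rule prob_few_explorations_le[OF assms])
  finally show ?thesis .
qed

lemma powr_two_thirds_increment_le:
  fixes s :: real
  assumes "0 < s"
  shows "3/2 * ((s + 1) powr (2/3) - s powr (2/3)) \<le> 1 / s powr (1/3)"
proof -
  define a where "a = s powr (1/3)"
  define b where "b = (s + 1) powr (1/3)"
  have "0 < a" "a \<le> b"
    using assms unfolding a_def b_def by (auto intro: powr_mono2)
  have cube: "a^3 = s" "b^3 = s + 1"
    using assms by (simp_all add: a_def b_def powr_power)
  have square: "s powr (2/3) = a^2" "(s + 1) powr (2/3) = b^2"
    using assms by (simp_all add: a_def b_def powr_power)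
  have "2 - 3 * a * (b^2 - a^2) = (b - a)^2 * (2 * b + a)"
  proof -
    have "2 = 2 * (b^3 - a^3)"
      using cube by simp
    moreover have "2 * (b^3 - a^3) - 3 * a * (b^2 - a^2) = (b - a)^2 * (2 * b + a)"
      by algebra
    ultimately show ?thesis
      by simp
  qed
  moreover have "0 \<le> (b - a)^2 * (2 * b + a)"
    using \<open>0 < a\<close> \<open>a \<le> b\<close> by simp
  ultimately have "3 * a * (b^2 - a^2) \<le> 2"
    by linarith
  then have "3/2 * (b^2 - a^2) \<le> 1 / a"
    using \<open>0 < a\<close> by (simp add: le_divide_eq algebra_simps)
  then show ?thesis
    unfolding square a_def[symmetric] .
qed

lemma sum_inverse_cube_root_ge:
  assumes "1 \<le> m" "m \<le> n"
  shows "3/2 * (real n powr (2/3) - real m powr (2/3)) \<le> (\<Sum>s=m..<n. 1 / real s powr (1/3))"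
  using assms(2)
proof (induction n rule: dec_induct)
  case (step n)
  have "3/2 * (real (Suc n) powr (2/3) - real n powr (2/3)) \<le> 1 / real n powr (1/3)"
    using powr_two_thirds_increment_le[of "real n"] assms step.hyps by (simp add: add.commute)
  with step.IH step.hyps show ?case
    by simp
qed simp

lemma cube_root_of_nat_cube: "(real M ^ 3) powr (1/3) = real M"
  using root_powr_inverse[of 3 "real M ^ 3"] real_root_pos2[of 3 "real M"] by simp

lemma explore_prob_eq_1:
  assumes "0 < s" "s \<le> M^3"
  shows "explore_prob M s = 1"
proof -
  have "real s powr (1/3) \<le> real M"
    using assms powr_mono2[of "1/3" "real s" "real M ^ 3"] by (simp add: cube_root_of_nat_cube)
  then show ?thesis
    using assms by (simp add: explore_prob_def le_divide_eq)
qed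

lemma explore_prob_eq:
  assumes "0 < M" "M^3 \<le> s"
  shows "explore_prob M s = real M / real s powr (1/3)"
proof -
  have "real M \<le> real s powr (1/3)"
    using assms powr_mono2[of "1/3" "real M ^ 3" "real s"] by (simp add: cube_root_of_nat_cube)
  then show ?thesis
    using assms by (simp add: explore_prob_def divide_le_eq)
qed

lemma sum_explore_prob_ge:
  assumes "0 < M" "M^3 + 1 \<le> t"
  shows "3/2 * real t powr (2/3) + real M^2 - 3/2 * (real M^3 + 1) powr (2/3)
    \<le> (\<Sum>s=1..t. explore_prob M s / real M)"
proof -
  have "{1..t} = {1..<t + 1}"
    by auto
  then have total: "(\<Sum>s=1..t. explore_prob M s / real M)
      = (\<Sum>s=1..<M^3 + 1. explore_prob M s / real M)
        + (\<Sum>s=M^3 + 1..<t + 1. explore_prob M s / real M)"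
    using assms(2) by (simp only: sum.atLeastLessThan_concat)
  have "(\<Sum>s=1..<M^3 + 1. explore_prob M s / real M) = real (M^3) / real M"
    by (simp add: explore_prob_eq_1)
  also have "\<dots> = real M^2"
    using assms(1) by (simp add: power3_eq_cube power2_eq_square)
  finally have head: "(\<Sum>s=1..<M^3 + 1. explore_prob M s / real M) = real M^2" .
  have "3/2 * (real (t + 1) powr (2/3) - real (M^3 + 1) powr (2/3))
      \<le> (\<Sum>s=M^3 + 1..<t + 1. 1 / real s powr (1/3))"
    using assms(2) by (intro sum_inverse_cube_root_ge) auto
  also have "\<dots> = (\<Sum>s=M^3 + 1..<t + 1. explore_prob M s / real M)"
    using assms(1) by (intro sum.cong) (simp_all add: explore_prob_eq)
  finally have tail: "3/2 * (real t powr (2/3) - (real M^3 + 1) powr (2/3))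
      \<le> (\<Sum>s=M^3 + 1..<t + 1. explore_prob M s / real M)"
    using powr_mono2[of "2/3" "real t" "real (t + 1)"] unfolding of_nat_add of_nat_power of_nat_1
    by simp
  show ?thesis
    unfolding total head using tail by (simp add: algebra_simps)
qed

lemma powr_two_thirds_cube_Suc_le:
  fixes x :: real
  assumes "1 \<le> x"
  shows "(x^3 + 1) powr (2/3) \<le> 2 * x^2"
proof -
  have cube: "(x powr 3) powr (2/3) = x^2"
    using assms by (simp only: powr_powr) (simp add: powr_numeral)
  have "(x^3 + 1) powr (2/3) \<le> (2 * x^3) powr (2/3)"
    using assms by (intro powr_mono2) (auto simp: one_le_power)
  also have "\<dots> = 2 powr (2/3) * (x powr 3) powr (2/3)"
    using assms by (simp add: powr_mult powr_numeral)
  also have "\<dots> = 2 powr (2/3) * x^2"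
    unfolding cube ..
  also have "\<dots> \<le> 2 * x^2"
    using powr_mono[of "2/3" 1 "2::real"] by (intro mult_right_mono) simp_all
  finally show ?thesis .
qed

lemma sum_explore_prob_deviation:
  assumes "0 < M" "M^3 + 1 \<le> t"
  shows "3 * (real M ^ 3 + 1) powr (2/3) / 2 - real M ^ 2 \<le> real t powr (2/3)"
    and "real t powr (2/3) - (3 * (real M ^ 3 + 1) powr (2/3) / 2 - real M ^ 2)
      \<le> (\<Sum>s=1..t. explore_prob M s / real M) - real t powr (2/3) / 2"
proof -
  have "real (M^3 + 1) \<le> real t"
    using assms(2) by (simp only: of_nat_le_iff)
  then have "(real M ^ 3 + 1) powr (2/3) \<le> real t powr (2/3)"
    by (intro powr_mono2) auto
  moreover have "(real M ^ 3 + 1) powr (2/3) \<le> 2 * real M ^ 2"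
    using assms(1) by (intro powr_two_thirds_cube_Suc_le) simp
  ultimately show "3 * (real M ^ 3 + 1) powr (2/3) / 2 - real M ^ 2 \<le> real t powr (2/3)"
    "real t powr (2/3) - (3 * (real M ^ 3 + 1) powr (2/3) / 2 - real M ^ 2)
      \<le> (\<Sum>s=1..t. explore_prob M s / real M) - real t powr (2/3) / 2"
    using sum_explore_prob_ge[OF assms] by linarith+
qed

lemma exp_Hoeffding_bound_mono:
  fixes t c e :: real
  assumes "0 < t" "c \<le> t powr (2/3)" "t powr (2/3) - c \<le> e"
  shows "exp (-2 * e^2 / t) \<le> exp (-2 * (t powr (1/6) - 1 / sqrt t * c)^2)"
proof -
  have "t powr (1/6) * sqrt t = t powr (2/3)"
    using assms(1) by (simp add: powr_half_sqrt[symmetric] powr_add[symmetric])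
  then have "t powr (1/6) - 1 / sqrt t * c = (t powr (2/3) - c) / sqrt t"
    using assms(1) by (simp add: field_simps)
  then have "(t powr (1/6) - 1 / sqrt t * c)^2 = (t powr (2/3) - c)^2 / t"
    using assms(1) by (simp add: power_divide)
  moreover have "(t powr (2/3) - c)^2 \<le> e^2"
    using assms(2,3) by (intro power_mono) auto
  ultimately show ?thesis
    using assms(1) by (simp add: divide_right_mono)
qed

theorem lemma2:
  fixes M :: nat and mu :: real and t :: nat
  assumes "M > 1" and "mu \<noteq> 0"
  shows "bad_event M mu t \<in> sets (focus_space M mu)
    \<and> (real t \<ge> real M ^ 3 + 1 \<longrightarrow>
         measure (focus_space M mu) (bad_event M mu t)
           \<le> exp (- 2 * (real t powr (1/6)
                 - (1 / sqrt (real t)) * (3 * (real M ^ 3 + 1) powr (2/3) / 2 - real M ^ 2))^2))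
    \<and> (t = 0 \<longrightarrow> measure (focus_space M mu) (bad_event M mu t) = 0)"
proof (intro conjI impI)
  show "bad_event M mu t \<in> sets (focus_space M mu)"
    by (rule sets_bad_event)
next
  assume "t = 0"
  then have "bad_event M mu t = {}"
    by (simp add: bad_event_def Tstat_def Ncount_def)
  then show "measure (focus_space M mu) (bad_event M mu t) = 0"
    by simp
next
  assume t: "real t \<ge> real M ^ 3 + 1"
  interpret P: prob_space "focus_space M mu"
    by (rule prob_space_focus_space)
  have "0 < M"
    using assms(1) by simp
  have "real (M^3 + 1) \<le> real t"
    using t by simp
  then have "M^3 + 1 \<le> t"
    by (simp only: of_nat_le_iff)
  then have "0 < t"
    by simp
  define m where "m = (\<Sum>s=1..t. explore_prob M s / real M)"
  define c where "c = 3 * (real M ^ 3 + 1) powr (2/3) / 2 - real M ^ 2"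
  define T where "T = real t powr (2/3)"
  note c = sum_explore_prob_deviation[OF \<open>0 < M\<close> \<open>M^3 + 1 \<le> t\<close>, folded m_def c_def T_def]
  then have "0 \<le> m - T / 2"
    by linarith
  have "bad_event M mu t
      \<subseteq> {\<omega> \<in> space (focus_space M mu). real (Ncount (hist M \<omega> t) 1) \<le> m - (m - T / 2)}"
    unfolding bad_event_def T_def by auto
  then have "measure (focus_space M mu) (bad_event M mu t)
      \<le> measure (focus_space M mu)
          {\<omega> \<in> space (focus_space M mu). real (Ncount (hist M \<omega> t) 1) \<le> m - (m - T / 2)}"
    by (rule P.finite_measure_mono) measurable
  also have "\<dots> \<le> exp (-2 * (m - T / 2)^2 / real t)"
    using prob_Ncount_one_le[OF \<open>0 < M\<close> \<open>0 \<le> m - T / 2\<close> \<open>0 < t\<close>, folded m_def] .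
  also have "\<dots> \<le> exp (-2 * (real t powr (1/6) - 1 / sqrt (real t) * c)^2)"
    using \<open>0 < t\<close> c unfolding T_def by (intro exp_Hoeffding_bound_mono) auto
  finally show "measure (focus_space M mu) (bad_event M mu t)
      \<le> exp (- 2 * (real t powr (1/6)
            - (1 / sqrt (real t)) * (3 * (real M ^ 3 + 1) powr (2/3) / 2 - real M ^ 2))^2)"
    unfolding c_def by simp
qed

end
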